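(* Let $V_0,V_1,V'_1,V'_2,V'_3,\ldots$ be vector bundles and let $$V_0\xrightarrow{K'_0}V'_1\xrightarrow{K'_1}V'_2\xrightarrow{K'_2}V'_3\xrightarrow{K'_3}V'_4\xrightarrow{K'_4}\cdots$$ be a full compatibility complex of differential operators. Let $K_0\colon V_0\to V_1$, $C_1\colon V_1\to V'_1$, $D_1\colon V'_1\to V_1$, $H'_1\colon V'_2\to V'_1$ be differential operators such that $C_1\circ K_0=K'_0$, $D_1\circ K'_0=K_0$ (i.e. the first square with $C_0=D_0=\mathrm{id}$, $H_0=H'_0=0$ is an equivalence up to homotopy), and $$\mathrm{id}-C_1\circ D_1=H'_1\circ K'_1 .$$ Define $K_1\colon V_1\to V_1\oplus V'_2$, $K_1=\bigl(\mathrm{id}-D_1C_1,\ K'_1C_1\bigr)$; $K_2\colon V_1\oplus V'_2\to V'_1\oplus V'_3$, $K_2(x,y)=\bigl(C_1x-H'_1y,\ K'_2y\bigr)$; $K_3\colon V'_1\oplus V'_3\to V'_4$, $K_3(x,y)=K'_3y$; and $K_l=K'_l\colon V'_l\to V'_{l+1}$ for $l\ge4$. Then $K_0,K_1,K_2,\ldots$ is a full compatibility complex for $K_0$. Moreover, together with the vertical maps $C_0=D_0=\mathrm{id}$, $C_1$, $D_1$, $C_2=(0\ \mathrm{id})\colon V_1\oplus V'_2\to V'_2$, $D_2=\bigl(D_1H'_1,\ \mathrm{id}-K'_1H'_1\bigr)\colon V'_2\to V_1\oplus V'_2$, $C_3=(0\ \mathrm{id})\colon V'_1\oplus V'_3\to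 V'_3$, $D_3=(0,\mathrm{id})\colon V'_3\to V'_1\oplus V'_3$, $C_l=D_l=\mathrm{id}$ for $l\ge4$, and homotopies $H_0=H'_0=0$, $H_1=(\mathrm{id}\ 0)\colon V_1\oplus V'_2\to V_1$, $H'_1$ as given, $H_2(x,y)=(D_1x,\,-K'_1x)\colon V'_1\oplus V'_3\to V_1\oplus V'_2$, $H'_2=0$, and $H_l=H'_l=0$ for $l\ge3$, the top complex $(K_l)$ and the bottom complex $(K'_l)$ are equivalent up to homotopy.
   Context: For a linear differential operator $K$, a differential operator $L$ with $L\circ K=0$ is a compatibility operator for $K$; it is complete if every differential operator $L'$ with $L'\circ K=0$ factors as $L'=L''\circ L$ for some differential operator $L''$. A complex of differential operators $K_l$, $l=0,1,\ldots$, is a (full) compatibility complex for $K$ if $K_0=K$ and each $K_l$ ($l\ge1$) is a complete compatibility operator for $K_{l-1}$. Given complexes $(K_l)$ and $(K'_l)$ (with $K_{-1}=K'_{-1}=H_{-1}=H'_{-1}=0$), an equivalence up to homotopy consists of maps $C_l$ (top to bottom) and $D_l$ (bottom to top) that are cochain maps ($K'_l C_l=C_{l+1}K_l$, $K_lD_l=D_{l+1}K'_l$) together with maps $H_l$ (from degree $l+1$ to degree $l$ of the top complex) and $H'_l$ (same for the bottom complex) such that $D_lC_l=\mathrm{id}-K_{l-1}H_{l-1}-H_lK_l$ and $C_lD_l=\mathrm{id}-K'_{l-1}H'_{l-1}-H'_lK'_l$ for all $l$. *)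

theory Defs
  imports Main
begin

text \<open>Abstract setting: vector bundles are objects of type 'o, differential operators
  are morphisms of type 'm, organised as a preadditive category with biproducts
  (direct sums of bundles).  cmp g f denotes the composite g after f.\<close>

record ('o, 'm) acat =
  hom  :: "'o \<Rightarrow> 'o \<Rightarrow> 'm set"
  cmp  :: "'m \<Rightarrow> 'm \<Rightarrow> 'm"
  pls  :: "'m \<Rightarrow> 'm \<Rightarrow> 'm"
  ngt  :: "'m \<Rightarrow> 'm"
  zro  :: "'o \<Rightarrow> 'o \<Rightarrow> 'm"
  idm  :: "'o \<Rightarrow> 'm"
  dsum :: "'o \<Rightarrow> 'o \<Rightarrow> 'o"
  inj1 :: "'o \<Rightarrow> 'o \<Rightarrow> 'm"
  inj2 :: "'o \<Rightarrow> 'o \<Rightarrow> 'm"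
  prj1 :: "'o \<Rightarrow> 'o \<Rightarrow> 'm"
  prj2 :: "'o \<Rightarrow> 'o \<Rightarrow> 'm"

definition additive_cat :: "('o, 'm) acat \<Rightarrow> bool" where
  "additive_cat Cat \<longleftrightarrow>
    (\<forall>A B C f g. f \<in> hom Cat A B \<longrightarrow> g \<in> hom Cat B C \<longrightarrow> cmp Cat g f \<in> hom Cat A C) \<and>
    (\<forall>A. idm Cat A \<in> hom Cat A A) \<and>
    (\<forall>A B f. f \<in> hom Cat A B \<longrightarrow> cmp Cat f (idm Cat A) = f \<and> cmp Cat (idm Cat B) f = f) \<and>
    (\<forall>A B C D f g h. f \<in> hom Cat A B \<longrightarrow> g \<in> hom Cat B C \<longrightarrow> h \<in> hom Cat C D \<longrightarrow>
        cmp Cat h (cmp Cat g f) = cmp Cat (cmp Cat h g) f) \<and>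
    (\<forall>A B. zro Cat A B \<in> hom Cat A B) \<and>
    (\<forall>A B f g. f \<in> hom Cat A B \<longrightarrow> g \<in> hom Cat A B \<longrightarrow> pls Cat f g \<in> hom Cat A B) \<and>
    (\<forall>A B f. f \<in> hom Cat A B \<longrightarrow> ngt Cat f \<in> hom Cat A B) \<and>
    (\<forall>A B f g h. f \<in> hom Cat A B \<longrightarrow> g \<in> hom Cat A B \<longrightarrow> h \<in> hom Cat A B \<longrightarrow>
        pls Cat (pls Cat f g) h = pls Cat f (pls Cat g h)) \<and>
    (\<forall>A B f g. f \<in> hom Cat A B \<longrightarrow> g \<in> hom Cat A B \<longrightarrow> pls Cat f g = pls Cat g f) \<and>
    (\<forall>A B f. f \<in> hom Cat A B \<longrightarrow> pls Cat (zro Cat A B) f = f) \<and>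
    (\<forall>A B f. f \<in> hom Cat A B \<longrightarrow> pls Cat f (ngt Cat f) = zro Cat A B) \<and>
    (\<forall>A B C f g g'. f \<in> hom Cat A B \<longrightarrow> g \<in> hom Cat B C \<longrightarrow> g' \<in> hom Cat B C \<longrightarrow>
        cmp Cat (pls Cat g g') f = pls Cat (cmp Cat g f) (cmp Cat g' f)) \<and>
    (\<forall>A B C f f' h. f \<in> hom Cat A B \<longrightarrow> f' \<in> hom Cat A B \<longrightarrow> h \<in> hom Cat B C \<longrightarrow>
        cmp Cat h (pls Cat f f') = pls Cat (cmp Cat h f) (cmp Cat h f')) \<and>
    (\<forall>A B. inj1 Cat A B \<in> hom Cat A (dsum Cat A B) \<and> inj2 Cat A B \<in> hom Cat B (dsum Cat A B) \<and>
        prj1 Cat A B \<in> hom Cat (dsum Cat A B) A \<and> prj2 Cat A B \<in> hom Cat (dsum Cat A B) B \<and>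
        cmp Cat (prj1 Cat A B) (inj1 Cat A B) = idm Cat A \<and>
        cmp Cat (prj2 Cat A B) (inj2 Cat A B) = idm Cat B \<and>
        cmp Cat (prj1 Cat A B) (inj2 Cat A B) = zro Cat B A \<and>
        cmp Cat (prj2 Cat A B) (inj1 Cat A B) = zro Cat A B \<and>
        pls Cat (cmp Cat (inj1 Cat A B) (prj1 Cat A B)) (cmp Cat (inj2 Cat A B) (prj2 Cat A B))
          = idm Cat (dsum Cat A B))"

definition sub :: "('o, 'm) acat \<Rightarrow> 'm \<Rightarrow> 'm \<Rightarrow> 'm" where
  "sub Cat f g = pls Cat f (ngt Cat g)"

definition complete_compat :: "('o, 'm) acat \<Rightarrow> 'o \<Rightarrow> 'o \<Rightarrow> 'o \<Rightarrow> 'm \<Rightarrow> 'm \<Rightarrow> bool" where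
  "complete_compat Cat A B D K L \<longleftrightarrow>
    K \<in> hom Cat A B \<and> L \<in> hom Cat B D \<and> cmp Cat L K = zro Cat A D \<and>
    (\<forall>E L'. L' \<in> hom Cat B E \<and> cmp Cat L' K = zro Cat A E \<longrightarrow>
        (\<exists>L''. L'' \<in> hom Cat D E \<and> L' = cmp Cat L'' L))"

definition full_compat_complex :: "('o, 'm) acat \<Rightarrow> (nat \<Rightarrow> 'o) \<Rightarrow> (nat \<Rightarrow> 'm) \<Rightarrow> bool" where
  "full_compat_complex Cat V K \<longleftrightarrow>
    (\<forall>l. K l \<in> hom Cat (V l) (V (Suc l))) \<and>
    (\<forall>l. complete_compat Cat (V l) (V (Suc l)) (V (Suc (Suc l))) (K l) (K (Suc l)))"

definition equiv_htpy :: "('o, 'm) acat \<Rightarrow> (nat \<Rightarrow> 'o) \<Rightarrow> (nat \<Rightarrow> 'm) \<Rightarrow> (nat \<Rightarrow> 'o) \<Rightarrow> (nat \<Rightarrow> 'm)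
    \<Rightarrow> (nat \<Rightarrow> 'm) \<Rightarrow> (nat \<Rightarrow> 'm) \<Rightarrow> (nat \<Rightarrow> 'm) \<Rightarrow> (nat \<Rightarrow> 'm) \<Rightarrow> bool" where
  "equiv_htpy Cat V K V' K' C D H H' \<longleftrightarrow>
    (\<forall>l. C l \<in> hom Cat (V l) (V' l) \<and> D l \<in> hom Cat (V' l) (V l) \<and>
         H l \<in> hom Cat (V (Suc l)) (V l) \<and> H' l \<in> hom Cat (V' (Suc l)) (V' l) \<and>
         cmp Cat (K' l) (C l) = cmp Cat (C (Suc l)) (K l) \<and>
         cmp Cat (K l) (D l) = cmp Cat (D (Suc l)) (K' l) \<and>
         cmp Cat (D l) (C l) =
           sub Cat (sub Cat (idm Cat (V l))
                      (if l = 0 then zro Cat (V l) (V l) else cmp Cat (K (l - 1)) (H (l - 1))))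
                   (cmp Cat (H l) (K l)) \<and>
         cmp Cat (C l) (D l) =
           sub Cat (sub Cat (idm Cat (V' l))
                      (if l = 0 then zro Cat (V' l) (V' l) else cmp Cat (K' (l - 1)) (H' (l - 1))))
                   (cmp Cat (H' l) (K' l)))"

text \<open>The constructions of the lemma. The bottom bundles are V' l with V' 0 = V_0.\<close>

definition topV :: "('o, 'm) acat \<Rightarrow> 'o \<Rightarrow> (nat \<Rightarrow> 'o) \<Rightarrow> nat \<Rightarrow> 'o" where
  "topV Cat V1 V' l =
    (if l = 0 then V' 0 else if l = 1 then V1
     else if l = 2 then dsum Cat V1 (V' 2)
     else if l = 3 then dsum Cat (V' 1) (V' 3) else V' l)"

definition topK :: "('o, 'm) acat \<Rightarrow> 'o \<Rightarrow> (nat \<Rightarrow> 'o) \<Rightarrow> (nat \<Rightarrow> 'm) \<Rightarrow> 'm \<Rightarrow> 'm \<Rightarrow> 'm \<Rightarrow> 'm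
    \<Rightarrow> nat \<Rightarrow> 'm" where
  "topK Cat V1 V' K' K0 C1 D1 H'1 l =
    (if l = 0 then K0
     else if l = 1 then
       pls Cat (cmp Cat (inj1 Cat V1 (V' 2)) (sub Cat (idm Cat V1) (cmp Cat D1 C1)))
               (cmp Cat (inj2 Cat V1 (V' 2)) (cmp Cat (K' 1) C1))
     else if l = 2 then
       pls Cat (cmp Cat (inj1 Cat (V' 1) (V' 3))
                  (sub Cat (cmp Cat C1 (prj1 Cat V1 (V' 2))) (cmp Cat H'1 (prj2 Cat V1 (V' 2)))))
               (cmp Cat (inj2 Cat (V' 1) (V' 3)) (cmp Cat (K' 2) (prj2 Cat V1 (V' 2))))
     else if l = 3 then cmp Cat (K' 3) (prj2 Cat (V' 1) (V' 3))
     else K' l)"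

definition Cmaps :: "('o, 'm) acat \<Rightarrow> 'o \<Rightarrow> (nat \<Rightarrow> 'o) \<Rightarrow> 'm \<Rightarrow> nat \<Rightarrow> 'm" where
  "Cmaps Cat V1 V' C1 l =
    (if l = 0 then idm Cat (V' 0) else if l = 1 then C1
     else if l = 2 then prj2 Cat V1 (V' 2)
     else if l = 3 then prj2 Cat (V' 1) (V' 3) else idm Cat (V' l))"

definition Dmaps :: "('o, 'm) acat \<Rightarrow> 'o \<Rightarrow> (nat \<Rightarrow> 'o) \<Rightarrow> (nat \<Rightarrow> 'm) \<Rightarrow> 'm \<Rightarrow> 'm \<Rightarrow> nat \<Rightarrow> 'm" where
  "Dmaps Cat V1 V' K' D1 H'1 l =
    (if l = 0 then idm Cat (V' 0) else if l = 1 then D1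
     else if l = 2 then
       pls Cat (cmp Cat (inj1 Cat V1 (V' 2)) (cmp Cat D1 H'1))
               (cmp Cat (inj2 Cat V1 (V' 2)) (sub Cat (idm Cat (V' 2)) (cmp Cat (K' 1) H'1)))
     else if l = 3 then inj2 Cat (V' 1) (V' 3) else idm Cat (V' l))"

definition Hmaps :: "('o, 'm) acat \<Rightarrow> 'o \<Rightarrow> (nat \<Rightarrow> 'o) \<Rightarrow> (nat \<Rightarrow> 'm) \<Rightarrow> 'm \<Rightarrow> nat \<Rightarrow> 'm" where
  "Hmaps Cat V1 V' K' D1 l =
    (if l = 1 then prj1 Cat V1 (V' 2)
     else if l = 2 then
       pls Cat (cmp Cat (inj1 Cat V1 (V' 2)) (cmp Cat D1 (prj1 Cat (V' 1) (V' 3))))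
               (cmp Cat (inj2 Cat V1 (V' 2)) (ngt Cat (cmp Cat (K' 1) (prj1 Cat (V' 1) (V' 3)))))
     else zro Cat (topV Cat V1 V' (Suc l)) (topV Cat V1 V' l))"

definition H'maps :: "('o, 'm) acat \<Rightarrow> (nat \<Rightarrow> 'o) \<Rightarrow> 'm \<Rightarrow> nat \<Rightarrow> 'm" where
  "H'maps Cat V' H'1 l = (if l = 1 then H'1 else zro Cat (V' (Suc l)) (V' l))"

end

theory Submission
  imports Defs
begin

text \<open>Completeness of compatibility operators transfers along an equivalence up to homotopy:
  if L K_l = 0, then (L D_{l+1}) K'_l = L K_l D_l = 0, so completeness below gives
  L D_{l+1} = M K'_{l+1}, and since D_{l+1} C_{l+1} = id - K_l H_l - H_{l+1} K_{l+1}, the operator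
  M C_{l+2} + L H_{l+1} composed with K_{l+1} gives back L. Hence a complex that is equivalent up
  to homotopy to a full compatibility complex is itself one, and it remains to check,
  componentwise on the direct sums, that the top operators form a complex and that the given
  maps satisfy the identities of an equivalence up to homotopy.\<close>

lemma level_cases [case_names zero one two three high]:
  fixes l :: nat
  obtains "l = 0" | "l = 1" | "l = 2" | "l = 3" | "4 \<le> l"
  by linarith

locale additive_category =
  fixes Cat :: "('o, 'm) acat"
  assumes additive: "additive_cat Cat"
begin

text \<open>The annotations let the simplifier discharge the hom-set side conditions of the
  axioms by unification.\<close>

definition tcomp :: "'o \<Rightarrow> 'o \<Rightarrow> 'o \<Rightarrow> 'm \<Rightarrow> 'm \<Rightarrow> 'm" where
  "tcomp A B C g f = cmp Cat g f"
definition tplus :: "'o \<Rightarrow> 'o \<Rightarrow> 'm \<Rightarrow> 'm \<Rightarrow> 'm" where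
  "tplus A B f g = pls Cat f g"
definition tneg :: "'o \<Rightarrow> 'o \<Rightarrow> 'm \<Rightarrow> 'm" where
  "tneg A B f = ngt Cat f"
definition tsub :: "'o \<Rightarrow> 'o \<Rightarrow> 'm \<Rightarrow> 'm \<Rightarrow> 'm" where
  "tsub A B f g = sub Cat f g"

lemmas typed_defs = tcomp_def tplus_def tneg_def tsub_def

lemmas cat_axioms = additive[unfolded additive_cat_def]

lemma tsub_eq [simp]: "tsub A B f g = tplus A B f (tneg A B g)"
  by (simp add: typed_defs sub_def)

lemma tcomp_hom [simp]: "f \<in> hom Cat A B \<Longrightarrow> g \<in> hom Cat B C \<Longrightarrow> tcomp A B C g f \<in> hom Cat A C"
  unfolding tcomp_def using cat_axioms by metis

lemma tplus_hom [simp]: "f \<in> hom Cat A B \<Longrightarrow> g \<in> hom Cat A B \<Longrightarrow> tplus A B f g \<in> hom Cat A B"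
  unfolding tplus_def using cat_axioms by metis

lemma tneg_hom [simp]: "f \<in> hom Cat A B \<Longrightarrow> tneg A B f \<in> hom Cat A B"
  unfolding tneg_def using cat_axioms by metis

lemma zro_hom [simp]: "zro Cat A B \<in> hom Cat A B"
  using cat_axioms by metis

lemma idm_hom [simp]: "idm Cat A \<in> hom Cat A A"
  using cat_axioms by metis

lemma dsum_hom [simp]:
  "inj1 Cat A B \<in> hom Cat A (dsum Cat A B)" "inj2 Cat A B \<in> hom Cat B (dsum Cat A B)"
  "prj1 Cat A B \<in> hom Cat (dsum Cat A B) A" "prj2 Cat A B \<in> hom Cat (dsum Cat A B) B"
  using cat_axioms by metis+

lemma tcomp_assoc [simp]:
  "f \<in> hom Cat A B \<Longrightarrow> g \<in> hom Cat B C \<Longrightarrow> h \<in> hom Cat C D \<Longrightarrow>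
    tcomp A B D (tcomp B C D h g) f = tcomp A C D h (tcomp A B C g f)"
  unfolding tcomp_def using cat_axioms by metis

lemma tcomp_idm [simp]:
  "f \<in> hom Cat A B \<Longrightarrow> tcomp A B B (idm Cat B) f = f"
  "f \<in> hom Cat A B \<Longrightarrow> tcomp A A B f (idm Cat A) = f"
  unfolding tcomp_def using cat_axioms by metis+

lemma tplus_assoc [simp]:
  "f \<in> hom Cat A B \<Longrightarrow> g \<in> hom Cat A B \<Longrightarrow> h \<in> hom Cat A B \<Longrightarrow>
    tplus A B (tplus A B f g) h = tplus A B f (tplus A B g h)"
  unfolding tplus_def using cat_axioms by metis

lemma tplus_commute: "f \<in> hom Cat A B \<Longrightarrow> g \<in> hom Cat A B \<Longrightarrow> tplus A B f g = tplus A B g f"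
  unfolding tplus_def using cat_axioms by metis

lemma tplus_left_commute:
  "f \<in> hom Cat A B \<Longrightarrow> g \<in> hom Cat A B \<Longrightarrow> h \<in> hom Cat A B \<Longrightarrow>
    tplus A B f (tplus A B g h) = tplus A B g (tplus A B f h)"
  by (metis tplus_assoc tplus_commute)

lemmas tplus_ac = tplus_commute tplus_left_commute

lemma tplus_zro [simp]:
  "f \<in> hom Cat A B \<Longrightarrow> tplus A B (zro Cat A B) f = f"
  "f \<in> hom Cat A B \<Longrightarrow> tplus A B f (zro Cat A B) = f"
  unfolding tplus_def using cat_axioms by metis+

lemma tplus_tneg [simp]:
  "f \<in> hom Cat A B \<Longrightarrow> tplus A B f (tneg A B f) = zro Cat A B"
  "f \<in> hom Cat A B \<Longrightarrow> tplus A B (tneg A B f) f = zro Cat A B"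
  unfolding tplus_def tneg_def using cat_axioms by metis+

lemma tplus_tneg_cancel [simp]:
  "f \<in> hom Cat A B \<Longrightarrow> g \<in> hom Cat A B \<Longrightarrow> tplus A B f (tplus A B (tneg A B f) g) = g"
  "f \<in> hom Cat A B \<Longrightarrow> g \<in> hom Cat A B \<Longrightarrow> tplus A B (tneg A B f) (tplus A B f g) = g"
  by (simp_all flip: tplus_assoc)

lemma tcomp_tplus_left [simp]:
  "f \<in> hom Cat A B \<Longrightarrow> g \<in> hom Cat B C \<Longrightarrow> g' \<in> hom Cat B C \<Longrightarrow>
    tcomp A B C (tplus B C g g') f = tplus A C (tcomp A B C g f) (tcomp A B C g' f)"
  unfolding tplus_def tcomp_def using cat_axioms by metis

lemma tcomp_tplus_right [simp]:
  "f \<in> hom Cat A B \<Longrightarrow> f' \<in> hom Cat A B \<Longrightarrow> h \<in> hom Cat B C \<Longrightarrow>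
    tcomp A B C h (tplus A B f f') = tplus A C (tcomp A B C h f) (tcomp A B C h f')"
  unfolding tplus_def tcomp_def using cat_axioms by metis

lemma tneg_unique:
  assumes f: "f \<in> hom Cat A B" and g: "g \<in> hom Cat A B" and sum: "tplus A B f g = zro Cat A B"
  shows "g = tneg A B f"
proof -
  have "g = tplus A B (tneg A B f) (tplus A B f g)" using f g by simp
  also have "\<dots> = tneg A B f" using sum f by simp
  finally show ?thesis .
qed

lemma tneg_zro [simp]: "tneg A B (zro Cat A B) = zro Cat A B"
  by (metis tneg_unique tplus_zro(1) zro_hom)

lemma tneg_tneg [simp]: "f \<in> hom Cat A B \<Longrightarrow> tneg A B (tneg A B f) = f"
  by (metis tneg_hom tneg_unique tplus_tneg(2))

lemma tneg_tplus [simp]: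
  assumes f: "f \<in> hom Cat A B" and g: "g \<in> hom Cat A B"
  shows "tneg A B (tplus A B f g) = tplus A B (tneg A B f) (tneg A B g)"
proof -
  have "tplus A B (tplus A B f g) (tplus A B (tneg A B f) (tneg A B g)) = zro Cat A B"
    using f g by (simp add: tplus_ac)
  thus ?thesis using f g by (metis tneg_hom tneg_unique tplus_hom)
qed

lemma idempotent_is_zro:
  assumes f: "f \<in> hom Cat A B" and idem: "tplus A B f f = f"
  shows "f = zro Cat A B"
proof -
  have "zro Cat A B = tplus A B (tplus A B f f) (tneg A B f)" using f idem by simp
  also have "\<dots> = f" using f by simp
  finally show ?thesis by simp
qed

lemma tcomp_zro_left [simp]: "f \<in> hom Cat A B \<Longrightarrow> tcomp A B C (zro Cat B C) f = zro Cat A C"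
  by (rule idempotent_is_zro) (simp_all flip: tcomp_tplus_left)

lemma tcomp_zro_right [simp]: "h \<in> hom Cat B C \<Longrightarrow> tcomp A B C h (zro Cat A B) = zro Cat A C"
  by (rule idempotent_is_zro) (simp_all flip: tcomp_tplus_right)

lemma tcomp_tneg_left [simp]:
  assumes f: "f \<in> hom Cat A B" and g: "g \<in> hom Cat B C"
  shows "tcomp A B C (tneg B C g) f = tneg A C (tcomp A B C g f)"
proof -
  have "tplus A C (tcomp A B C g f) (tcomp A B C (tneg B C g) f) = zro Cat A C"
    using f g by (simp flip: tcomp_tplus_left)
  thus ?thesis using f g by (metis tcomp_hom tneg_hom tneg_unique)
qed

lemma tcomp_tneg_right [simp]:
  assumes f: "f \<in> hom Cat A B" and g: "g \<in> hom Cat B C"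
  shows "tcomp A B C g (tneg A B f) = tneg A C (tcomp A B C g f)"
proof -
  have "tplus A C (tcomp A B C g f) (tcomp A B C g (tneg A B f)) = zro Cat A C"
    using f g by (simp flip: tcomp_tplus_right)
  thus ?thesis using f g by (metis tcomp_hom tneg_hom tneg_unique)
qed

lemma dsum_prj_inj [simp]:
  "tcomp A (dsum Cat A B) A (prj1 Cat A B) (inj1 Cat A B) = idm Cat A"
  "tcomp B (dsum Cat A B) B (prj2 Cat A B) (inj2 Cat A B) = idm Cat B"
  "tcomp B (dsum Cat A B) A (prj1 Cat A B) (inj2 Cat A B) = zro Cat B A"
  "tcomp A (dsum Cat A B) B (prj2 Cat A B) (inj1 Cat A B) = zro Cat A B"
  unfolding tcomp_def using cat_axioms by metis+

lemma dsum_prj_inj_tcomp [simp]: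
  "f \<in> hom Cat X A \<Longrightarrow>
    tcomp X (dsum Cat A B) A (prj1 Cat A B) (tcomp X A (dsum Cat A B) (inj1 Cat A B) f) = f"
  "g \<in> hom Cat X B \<Longrightarrow>
    tcomp X (dsum Cat A B) B (prj2 Cat A B) (tcomp X B (dsum Cat A B) (inj2 Cat A B) g) = g"
  "g \<in> hom Cat X B \<Longrightarrow>
    tcomp X (dsum Cat A B) A (prj1 Cat A B) (tcomp X B (dsum Cat A B) (inj2 Cat A B) g) = zro Cat X A"
  "f \<in> hom Cat X A \<Longrightarrow>
    tcomp X (dsum Cat A B) B (prj2 Cat A B) (tcomp X A (dsum Cat A B) (inj1 Cat A B) f) = zro Cat X B"
  by (simp_all flip: tcomp_assoc)

lemma dsum_inj_prj_sum:
  "tplus (dsum Cat A B) (dsum Cat A B)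
     (tcomp (dsum Cat A B) A (dsum Cat A B) (inj1 Cat A B) (prj1 Cat A B))
     (tcomp (dsum Cat A B) B (dsum Cat A B) (inj2 Cat A B) (prj2 Cat A B))
   = idm Cat (dsum Cat A B)"
  unfolding tcomp_def tplus_def using cat_axioms by metis

lemma dsum_hom_into_eqI:
  assumes f: "f \<in> hom Cat X (dsum Cat A B)" and g: "g \<in> hom Cat X (dsum Cat A B)"
    and fst: "tcomp X (dsum Cat A B) A (prj1 Cat A B) f = tcomp X (dsum Cat A B) A (prj1 Cat A B) g"
    and snd: "tcomp X (dsum Cat A B) B (prj2 Cat A B) f = tcomp X (dsum Cat A B) B (prj2 Cat A B) g"
  shows "f = g"
proof -
  let ?split = "\<lambda>h. tplus X (dsum Cat A B)
        (tcomp X A (dsum Cat A B) (inj1 Cat A B) (tcomp X (dsum Cat A B) A (prj1 Cat A B) h))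
        (tcomp X B (dsum Cat A B) (inj2 Cat A B) (tcomp X (dsum Cat A B) B (prj2 Cat A B) h))"
  have split: "h = ?split h" if h: "h \<in> hom Cat X (dsum Cat A B)" for h
  proof -
    have "h = tcomp X (dsum Cat A B) (dsum Cat A B) (idm Cat (dsum Cat A B)) h" using h by simp
    also have "\<dots> = ?split h" using h by (simp flip: dsum_inj_prj_sum)
    finally show ?thesis .
  qed
  have "f = ?split f" using f by (rule split)
  also have "\<dots> = ?split g" by (simp only: fst snd)
  also have "\<dots> = g" using g by (rule split[symmetric])
  finally show ?thesis .
qed

lemma dsum_hom_from_eqI:
  assumes f: "f \<in> hom Cat (dsum Cat A B) Y" and g: "g \<in> hom Cat (dsum Cat A B) Y"
    and fst: "tcomp A (dsum Cat A B) Y f (inj1 Cat A B) = tcomp A (dsum Cat A B) Y g (inj1 Cat A B)"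
    and snd: "tcomp B (dsum Cat A B) Y f (inj2 Cat A B) = tcomp B (dsum Cat A B) Y g (inj2 Cat A B)"
  shows "f = g"
proof -
  let ?split = "\<lambda>h. tplus (dsum Cat A B) Y
        (tcomp (dsum Cat A B) A Y (tcomp A (dsum Cat A B) Y h (inj1 Cat A B)) (prj1 Cat A B))
        (tcomp (dsum Cat A B) B Y (tcomp B (dsum Cat A B) Y h (inj2 Cat A B)) (prj2 Cat A B))"
  have split: "h = ?split h" if h: "h \<in> hom Cat (dsum Cat A B) Y" for h
  proof -
    have "h = tcomp (dsum Cat A B) (dsum Cat A B) Y h (idm Cat (dsum Cat A B))" using h by simp
    also have "\<dots> = ?split h"
      using h by (simp del: tcomp_assoc add: tcomp_assoc[symmetric] flip: dsum_inj_prj_sum)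
    finally show ?thesis .
  qed
  have "f = ?split f" using f by (rule split)
  also have "\<dots> = ?split g" by (simp only: fst snd)
  also have "\<dots> = g" using g by (rule split[symmetric])
  finally show ?thesis .
qed

lemma dsum_hom_between_eqI:
  assumes f: "f \<in> hom Cat (dsum Cat A B) (dsum Cat C D)"
    and g: "g \<in> hom Cat (dsum Cat A B) (dsum Cat C D)"
    and "tcomp A (dsum Cat C D) C (prj1 Cat C D) (tcomp A (dsum Cat A B) (dsum Cat C D) f (inj1 Cat A B))
       = tcomp A (dsum Cat C D) C (prj1 Cat C D) (tcomp A (dsum Cat A B) (dsum Cat C D) g (inj1 Cat A B))"
    and "tcomp A (dsum Cat C D) D (prj2 Cat C D) (tcomp A (dsum Cat A B) (dsum Cat C D) f (inj1 Cat A B))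
       = tcomp A (dsum Cat C D) D (prj2 Cat C D) (tcomp A (dsum Cat A B) (dsum Cat C D) g (inj1 Cat A B))"
    and "tcomp B (dsum Cat C D) C (prj1 Cat C D) (tcomp B (dsum Cat A B) (dsum Cat C D) f (inj2 Cat A B))
       = tcomp B (dsum Cat C D) C (prj1 Cat C D) (tcomp B (dsum Cat A B) (dsum Cat C D) g (inj2 Cat A B))"
    and "tcomp B (dsum Cat C D) D (prj2 Cat C D) (tcomp B (dsum Cat A B) (dsum Cat C D) f (inj2 Cat A B))
       = tcomp B (dsum Cat C D) D (prj2 Cat C D) (tcomp B (dsum Cat A B) (dsum Cat C D) g (inj2 Cat A B))"
  shows "f = g"
proof (rule dsum_hom_from_eqI[OF f g])
  show "tcomp A (dsum Cat A B) (dsum Cat C D) f (inj1 Cat A B)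
      = tcomp A (dsum Cat A B) (dsum Cat C D) g (inj1 Cat A B)"
    by (rule dsum_hom_into_eqI[where A = C and B = D]) (use assms in simp_all)
  show "tcomp B (dsum Cat A B) (dsum Cat C D) f (inj2 Cat A B)
      = tcomp B (dsum Cat A B) (dsum Cat C D) g (inj2 Cat A B)"
    by (rule dsum_hom_into_eqI[where A = C and B = D]) (use assms in simp_all)
qed

lemma tcomp_eq_extend:
  "tcomp A B C g f = r \<Longrightarrow> f \<in> hom Cat A B \<Longrightarrow> g \<in> hom Cat B C \<Longrightarrow> y \<in> hom Cat X A \<Longrightarrow>
    tcomp X B C g (tcomp X A B f y) = tcomp X A C r y"
  by (simp flip: tcomp_assoc)

lemma complete_compat_transfer:
  assumes K: "K \<in> hom Cat Va Vb" and L: "L \<in> hom Cat Vb Vc"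
    and LK: "cmp Cat L K = zro Cat Va Vc"
    and Da: "Da \<in> hom Cat Wa Va" and Db: "Db \<in> hom Cat Wb Vb"
    and Cb: "Cb \<in> hom Cat Vb Wb" and Cc: "Cc \<in> hom Cat Vc Wc"
    and Ha: "Ha \<in> hom Cat Vb Va" and Hb: "Hb \<in> hom Cat Vc Vb"
    and KD: "cmp Cat K Da = cmp Cat Db K'"
    and CL: "cmp Cat L' Cb = cmp Cat Cc L"
    and DC: "cmp Cat Db Cb = sub Cat (sub Cat (idm Cat Vb) (cmp Cat K Ha)) (cmp Cat Hb L)"
    and bottom: "complete_compat Cat Wa Wb Wc K' L'"
  shows "complete_compat Cat Va Vb Vc K L"
  unfolding complete_compat_def
proof (intro conjI allI impI K L LK, elim conjE)
  have K': "K' \<in> hom Cat Wa Wb" and L': "L' \<in> hom Cat Wb Wc"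
    using bottom unfolding complete_compat_def by auto
  have KD': "tcomp Wa Va Vb K Da = tcomp Wa Wb Vb Db K'"
    and CL': "tcomp Vb Wb Wc L' Cb = tcomp Vb Vc Wc Cc L"
    and DC': "tcomp Vb Wb Vb Db Cb =
      tsub Vb Vb (tsub Vb Vb (idm Cat Vb) (tcomp Vb Va Vb K Ha)) (tcomp Vb Vc Vb Hb L)"
    using KD CL DC by (simp_all only: typed_defs)
  fix E M assume M: "M \<in> hom Cat Vb E" and "cmp Cat M K = zro Cat Va E"
  then have MK: "tcomp Va Vb E M K = zro Cat Va E" by (simp add: tcomp_def)
  have "tcomp Wa Wb E (tcomp Wb Vb E M Db) K' = tcomp Wa Vb E M (tcomp Wa Va Vb K Da)"
    using M Db K' by (simp add: KD')
  also have "\<dots> = zro Cat Wa E"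
    using M K Da by (simp flip: tcomp_assoc add: MK)
  finally have "cmp Cat (cmp Cat M Db) K' = zro Cat Wa E"
    by (simp add: tcomp_def)
  moreover have "cmp Cat M Db \<in> hom Cat Wb E"
    using M Db tcomp_hom unfolding tcomp_def by blast
  ultimately obtain N where N: "N \<in> hom Cat Wc E" and "cmp Cat M Db = cmp Cat N L'"
    using bottom unfolding complete_compat_def by blast
  then have ND: "tcomp Wb Wc E N L' = tcomp Wb Vb E M Db" by (simp add: tcomp_def)
  define M' where "M' = tplus Vc E (tcomp Vc Wc E N Cc) (tcomp Vc Vb E M Hb)"
  have "tcomp Vb Vc E M' L =
      tplus Vb E (tcomp Vb Wc E N (tcomp Vb Vc Wc Cc L)) (tcomp Vb Vb E M (tcomp Vb Vc Vb Hb L))"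
    unfolding M'_def using N Cc M Hb L by simp
  also have "tcomp Vb Wc E N (tcomp Vb Vc Wc Cc L) = tcomp Vb Vb E M (tcomp Vb Wb Vb Db Cb)"
    using N L' Cb M Db by (simp flip: CL' tcomp_assoc add: ND)
  also have "\<dots> = tsub Vb E (tsub Vb E M (tcomp Vb Va E (tcomp Va Vb E M K) Ha))
      (tcomp Vb Vb E M (tcomp Vb Vc Vb Hb L))"
    unfolding DC' using M K Ha Hb L by (simp del: tcomp_assoc add: tcomp_assoc[symmetric])
  finally have "tcomp Vb Vc E M' L = M"
    using M Ha Hb L by (simp add: MK)
  moreover have "M' \<in> hom Cat Vc E"
    unfolding M'_def using N Cc M Hb by simp
  ultimately show "\<exists>M'. M' \<in> hom Cat Vc E \<and> M = cmp Cat M' L"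
    by (auto simp: tcomp_def)
qed

lemma full_compat_complex_transfer:
  assumes equiv: "equiv_htpy Cat V K V' K' C D H H'"
    and hom: "\<And>l. K l \<in> hom Cat (V l) (V (Suc l))"
    and complex: "\<And>l. cmp Cat (K (Suc l)) (K l) = zro Cat (V l) (V (Suc (Suc l)))"
    and bottom: "full_compat_complex Cat V' K'"
  shows "full_compat_complex Cat V K"
  unfolding full_compat_complex_def
proof (intro allI conjI hom)
  fix l
  show "complete_compat Cat (V l) (V (Suc l)) (V (Suc (Suc l))) (K l) (K (Suc l))"
    by (rule complete_compat_transfer[where Da = "D l" and Db = "D (Suc l)" and Cb = "C (Suc l)"
          and Cc = "C (Suc (Suc l))" and Ha = "H l" and Hb = "H (Suc l)" and K' = "K' l"
          and L' = "K' (Suc l)" and Wa = "V' l" and Wb = "V' (Suc l)" and Wc = "V' (Suc (Suc l))"])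
      (use equiv bottom hom complex in \<open>simp_all add: equiv_htpy_def full_compat_complex_def\<close>)
qed

lemma cmp_idm_left: "f \<in> hom Cat A B \<Longrightarrow> cmp Cat (idm Cat B) f = f"
  using tcomp_idm(1) unfolding tcomp_def .

lemma cmp_idm_right: "f \<in> hom Cat A B \<Longrightarrow> cmp Cat f (idm Cat A) = f"
  using tcomp_idm(2) unfolding tcomp_def .

lemma cmp_zro_left: "f \<in> hom Cat A B \<Longrightarrow> cmp Cat (zro Cat B C) f = zro Cat A C"
  using tcomp_zro_left unfolding tcomp_def .

lemma cmp_zro_right: "h \<in> hom Cat B C \<Longrightarrow> cmp Cat h (zro Cat A B) = zro Cat A C"
  using tcomp_zro_right unfolding tcomp_def .

lemma sub_zro:
  assumes "f \<in> hom Cat A B" shows "sub Cat f (zro Cat A B) = f"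
proof -
  have "tsub A B f (zro Cat A B) = f" using assms by simp
  then show ?thesis unfolding tsub_def .
qed

end

locale changed_first_operator = additive_category Cat for Cat :: "('o, 'm) acat" +
  fixes V1 :: 'o and V' :: "nat \<Rightarrow> 'o" and K' :: "nat \<Rightarrow> 'm" and K0 C1 D1 H'1 :: 'm
  assumes bottom: "full_compat_complex Cat V' K'"
    and K0 [simp]: "K0 \<in> hom Cat (V' 0) V1"
    and C1 [simp]: "C1 \<in> hom Cat V1 (V' 1)"
    and D1 [simp]: "D1 \<in> hom Cat (V' 1) V1"
    and H'1 [simp]: "H'1 \<in> hom Cat (V' 2) (V' 1)"
    and CK: "cmp Cat C1 K0 = K' 0"
    and DK: "cmp Cat D1 (K' 0) = K0"
    and htpy: "sub Cat (idm Cat (V' 1)) (cmp Cat C1 D1) = cmp Cat H'1 (K' 1)"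
begin

abbreviation "W2 \<equiv> dsum Cat V1 (V' 2)"
abbreviation "W3 \<equiv> dsum Cat (V' 1) (V' 3)"

abbreviation "Vt \<equiv> topV Cat V1 V'"
abbreviation "Kt \<equiv> topK Cat V1 V' K' K0 C1 D1 H'1"
abbreviation "Ct \<equiv> Cmaps Cat V1 V' C1"
abbreviation "Dt \<equiv> Dmaps Cat V1 V' K' D1 H'1"
abbreviation "Ht \<equiv> Hmaps Cat V1 V' K' D1"
abbreviation "H't \<equiv> H'maps Cat V' H'1"

lemma K'_hom: "K' l \<in> hom Cat (V' l) (V' (Suc l))"
  using bottom unfolding full_compat_complex_def by blast

lemma K'_complex: "cmp Cat (K' (Suc l)) (K' l) = zro Cat (V' l) (V' (Suc (Suc l)))"
  using bottom unfolding full_compat_complex_def complete_compat_def by blast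

lemma K'_hom_low [simp]:
  "K' 0 \<in> hom Cat (V' 0) (V' 1)" "K' 1 \<in> hom Cat (V' 1) (V' 2)" "K' 2 \<in> hom Cat (V' 2) (V' 3)"
  "K' 3 \<in> hom Cat (V' 3) (V' 4)" "K' 4 \<in> hom Cat (V' 4) (V' 5)"
  using K'_hom[of 0] K'_hom[of 1] K'_hom[of 2] K'_hom[of 3] K'_hom[of 4]
  by (simp_all add: eval_nat_numeral)

lemma K'_complex_low:
  "tcomp (V' 0) (V' 1) (V' 2) (K' 1) (K' 0) = zro Cat (V' 0) (V' 2)"
  "tcomp (V' 1) (V' 2) (V' 3) (K' 2) (K' 1) = zro Cat (V' 1) (V' 3)"
  "tcomp (V' 2) (V' 3) (V' 4) (K' 3) (K' 2) = zro Cat (V' 2) (V' 4)"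
  "tcomp (V' 3) (V' 4) (V' 5) (K' 4) (K' 3) = zro Cat (V' 3) (V' 5)"
  using K'_complex[of 0] K'_complex[of 1] K'_complex[of 2] K'_complex[of 3]
  by (simp_all add: tcomp_def eval_nat_numeral)

declare One_nat_def [simp del]

lemma first_square:
  "tcomp (V' 0) V1 (V' 1) C1 K0 = K' 0"
  "tcomp (V' 0) (V' 1) V1 D1 (K' 0) = K0"
  "tcomp (V' 1) (V' 2) (V' 1) H'1 (K' 1) = tsub (V' 1) (V' 1) (idm Cat (V' 1)) (tcomp (V' 1) V1 (V' 1) C1 D1)"
  using CK DK htpy by (simp_all only: typed_defs)

text \<open>The simplifier nests composites to the right, so each identity \<open>g f = r\<close> is also needed in
  the form \<open>g (f y) = r y\<close>.\<close>
lemmas bottom_simps [simp] =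
  K'_complex_low first_square
  K'_complex_low[THEN tcomp_eq_extend] first_square[THEN tcomp_eq_extend]

lemma topV_low: "Vt 0 = V' 0" "Vt 1 = V1" "Vt 2 = W2" "Vt 3 = W3"
  by (simp_all add: topV_def One_nat_def[symmetric])

lemma top_eval_high:
  assumes "4 \<le> l"
  shows "Vt l = V' l" "Kt l = K' l" "Ct l = idm Cat (V' l)" "Dt l = idm Cat (V' l)"
    "Ht l = zro Cat (V' (Suc l)) (V' l)" "H't l = zro Cat (V' (Suc l)) (V' l)"
  using assms by (simp_all add: topV_def topK_def Cmaps_def Dmaps_def Hmaps_def H'maps_def)

lemma top_maps_low:
  "Kt 0 = K0"
  "Kt 1 = tplus V1 W2
     (tcomp V1 V1 W2 (inj1 Cat V1 (V' 2)) (tsub V1 V1 (idm Cat V1) (tcomp V1 (V' 1) V1 D1 C1)))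
     (tcomp V1 (V' 2) W2 (inj2 Cat V1 (V' 2)) (tcomp V1 (V' 1) (V' 2) (K' 1) C1))"
  "Kt 2 = tplus W2 W3
     (tcomp W2 (V' 1) W3 (inj1 Cat (V' 1) (V' 3))
       (tsub W2 (V' 1) (tcomp W2 V1 (V' 1) C1 (prj1 Cat V1 (V' 2)))
         (tcomp W2 (V' 2) (V' 1) H'1 (prj2 Cat V1 (V' 2)))))
     (tcomp W2 (V' 3) W3 (inj2 Cat (V' 1) (V' 3)) (tcomp W2 (V' 2) (V' 3) (K' 2) (prj2 Cat V1 (V' 2))))"
  "Kt 3 = tcomp W3 (V' 3) (V' 4) (K' 3) (prj2 Cat (V' 1) (V' 3))"
  "Ct 0 = idm Cat (V' 0)" "Ct 1 = C1" "Ct 2 = prj2 Cat V1 (V' 2)" "Ct 3 = prj2 Cat (V' 1) (V' 3)"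
  "Dt 0 = idm Cat (V' 0)" "Dt 1 = D1"
  "Dt 2 = tplus (V' 2) W2
     (tcomp (V' 2) V1 W2 (inj1 Cat V1 (V' 2)) (tcomp (V' 2) (V' 1) V1 D1 H'1))
     (tcomp (V' 2) (V' 2) W2 (inj2 Cat V1 (V' 2))
       (tsub (V' 2) (V' 2) (idm Cat (V' 2)) (tcomp (V' 2) (V' 1) (V' 2) (K' 1) H'1)))"
  "Dt 3 = inj2 Cat (V' 1) (V' 3)"
  "Ht 0 = zro Cat V1 (V' 0)" "Ht 1 = prj1 Cat V1 (V' 2)"
  "Ht 2 = tplus W3 W2
     (tcomp W3 V1 W2 (inj1 Cat V1 (V' 2)) (tcomp W3 (V' 1) V1 D1 (prj1 Cat (V' 1) (V' 3))))
     (tcomp W3 (V' 2) W2 (inj2 Cat V1 (V' 2))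
       (tneg W3 (V' 2) (tcomp W3 (V' 1) (V' 2) (K' 1) (prj1 Cat (V' 1) (V' 3)))))"
  "Ht 3 = zro Cat (V' 4) W3"
  "H't 0 = zro Cat (V' 1) (V' 0)" "H't 1 = H'1" "H't 2 = zro Cat (V' 3) (V' 2)"
  "H't 3 = zro Cat (V' 4) (V' 3)"
  by (simp_all add: topV_low top_eval_high topK_def Cmaps_def Dmaps_def Hmaps_def H'maps_def
      typed_defs sub_def One_nat_def[symmetric])

lemma top_complex_low:
  "tcomp (V' 0) V1 W2 (Kt 1) (Kt 0) = zro Cat (V' 0) W2"
  "tcomp V1 W2 W3 (Kt 2) (Kt 1) = zro Cat V1 W3"
  "tcomp W2 W3 (V' 4) (Kt 3) (Kt 2) = zro Cat W2 (V' 4)"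
  "tcomp W3 (V' 4) (V' 5) (Kt 4) (Kt 3) = zro Cat W3 (V' 5)"
  subgoal by (rule dsum_hom_into_eqI[where X = "V' 0" and A = V1 and B = "V' 2"])
      (simp_all add: topV_low top_maps_low)
  subgoal by (rule dsum_hom_into_eqI[where X = V1 and A = "V' 1" and B = "V' 3"])
      (simp_all add: topV_low top_maps_low tplus_ac)
  subgoal by (simp add: topV_low top_maps_low)
  subgoal by (simp add: topV_low top_maps_low top_eval_high)
  done

lemma top_chain_C_low:
  "tcomp (V' 0) (V' 0) (V' 1) (K' 0) (Ct 0) = tcomp (V' 0) V1 (V' 1) (Ct 1) (Kt 0)"
  "tcomp V1 (V' 1) (V' 2) (K' 1) (Ct 1) = tcomp V1 W2 (V' 2) (Ct 2) (Kt 1)"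
  "tcomp W2 (V' 2) (V' 3) (K' 2) (Ct 2) = tcomp W2 W3 (V' 3) (Ct 3) (Kt 2)"
  "tcomp W3 (V' 3) (V' 4) (K' 3) (Ct 3) = tcomp W3 (V' 4) (V' 4) (Ct 4) (Kt 3)"
  by (simp_all add: topV_low top_maps_low top_eval_high)

lemma top_chain_D_low:
  "tcomp (V' 0) (V' 0) V1 (Kt 0) (Dt 0) = tcomp (V' 0) (V' 1) V1 (Dt 1) (K' 0)"
  "tcomp (V' 1) V1 W2 (Kt 1) (Dt 1) = tcomp (V' 1) (V' 2) W2 (Dt 2) (K' 1)"
  "tcomp (V' 2) W2 W3 (Kt 2) (Dt 2) = tcomp (V' 2) (V' 3) W3 (Dt 3) (K' 2)"
  "tcomp (V' 3) W3 (V' 4) (Kt 3) (Dt 3) = tcomp (V' 3) (V' 4) (V' 4) (Dt 4) (K' 3)"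
  subgoal by (simp add: topV_low top_maps_low)
  subgoal by (rule dsum_hom_into_eqI[where X = "V' 1" and A = V1 and B = "V' 2"])
      (simp_all add: topV_low top_maps_low tplus_ac)
  subgoal by (rule dsum_hom_into_eqI[where X = "V' 2" and A = "V' 1" and B = "V' 3"])
      (simp_all add: topV_low top_maps_low tplus_ac)
  subgoal by (simp add: topV_low top_maps_low top_eval_high)
  done

lemma top_homotopy_DC_low:
  "tcomp (V' 0) (V' 0) (V' 0) (Dt 0) (Ct 0) = tsub (V' 0) (V' 0)
     (tsub (V' 0) (V' 0) (idm Cat (V' 0)) (zro Cat (V' 0) (V' 0))) (tcomp (V' 0) V1 (V' 0) (Ht 0) (Kt 0))"
  "tcomp V1 (V' 1) V1 (Dt 1) (Ct 1) = tsub V1 V1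
     (tsub V1 V1 (idm Cat V1) (tcomp V1 (V' 0) V1 (Kt 0) (Ht 0))) (tcomp V1 W2 V1 (Ht 1) (Kt 1))"
  "tcomp W2 (V' 2) W2 (Dt 2) (Ct 2) = tsub W2 W2
     (tsub W2 W2 (idm Cat W2) (tcomp W2 V1 W2 (Kt 1) (Ht 1))) (tcomp W2 W3 W2 (Ht 2) (Kt 2))"
  "tcomp W3 (V' 3) W3 (Dt 3) (Ct 3) = tsub W3 W3
     (tsub W3 W3 (idm Cat W3) (tcomp W3 W2 W3 (Kt 2) (Ht 2))) (tcomp W3 (V' 4) W3 (Ht 3) (Kt 3))"
  subgoal by (simp add: topV_low top_maps_low)
  subgoal by (simp add: topV_low top_maps_low)
  subgoal by (rule dsum_hom_between_eqI[where A = V1 and B = "V' 2" and C = V1 and D = "V' 2"])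
      (simp_all add: topV_low top_maps_low tplus_ac)
  subgoal by (rule dsum_hom_between_eqI[where A = "V' 1" and B = "V' 3" and C = "V' 1" and D = "V' 3"])
      (simp_all add: topV_low top_maps_low tplus_ac)
  done

lemma top_homotopy_CD_low:
  "tcomp (V' 0) (V' 0) (V' 0) (Ct 0) (Dt 0) = tsub (V' 0) (V' 0)
     (tsub (V' 0) (V' 0) (idm Cat (V' 0)) (zro Cat (V' 0) (V' 0)))
     (tcomp (V' 0) (V' 1) (V' 0) (H't 0) (K' 0))"
  "tcomp (V' 1) V1 (V' 1) (Ct 1) (Dt 1) = tsub (V' 1) (V' 1)
     (tsub (V' 1) (V' 1) (idm Cat (V' 1)) (tcomp (V' 1) (V' 0) (V' 1) (K' 0) (H't 0)))
     (tcomp (V' 1) (V' 2) (V' 1) (H't 1) (K' 1))"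
  "tcomp (V' 2) W2 (V' 2) (Ct 2) (Dt 2) = tsub (V' 2) (V' 2)
     (tsub (V' 2) (V' 2) (idm Cat (V' 2)) (tcomp (V' 2) (V' 1) (V' 2) (K' 1) (H't 1)))
     (tcomp (V' 2) (V' 3) (V' 2) (H't 2) (K' 2))"
  "tcomp (V' 3) W3 (V' 3) (Ct 3) (Dt 3) = tsub (V' 3) (V' 3)
     (tsub (V' 3) (V' 3) (idm Cat (V' 3)) (tcomp (V' 3) (V' 2) (V' 3) (K' 2) (H't 2)))
     (tcomp (V' 3) (V' 4) (V' 3) (H't 3) (K' 3))"
  by (simp_all add: topV_low top_maps_low)

lemma top_hom: "Kt l \<in> hom Cat (Vt l) (Vt (Suc l))"
  by (cases l rule: level_cases)
    (simp_all add: topV_low top_maps_low top_eval_high K'_hom One_nat_def[symmetric])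

lemma top_maps_hom:
  "Ct l \<in> hom Cat (Vt l) (V' l) \<and> Dt l \<in> hom Cat (V' l) (Vt l) \<and>
   Ht l \<in> hom Cat (Vt (Suc l)) (Vt l) \<and> H't l \<in> hom Cat (V' (Suc l)) (V' l)"
  by (cases l rule: level_cases)
    (simp_all add: topV_low top_maps_low top_eval_high One_nat_def[symmetric])

lemma top_complex: "cmp Cat (Kt (Suc l)) (Kt l) = zro Cat (Vt l) (Vt (Suc (Suc l)))"
proof (cases l rule: level_cases)
  case high
  then show ?thesis by (simp add: top_eval_high K'_complex)
qed (use top_complex_low[unfolded tcomp_def] in
      \<open>simp_all add: topV_low top_eval_high One_nat_def[symmetric]\<close>)

lemma top_chain_C: "cmp Cat (K' l) (Ct l) = cmp Cat (Ct (Suc l)) (Kt l)"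
proof (cases l rule: level_cases)
  case high
  then show ?thesis by (simp add: top_eval_high cmp_idm_left[OF K'_hom] cmp_idm_right[OF K'_hom])
qed (use top_chain_C_low[unfolded tcomp_def] in \<open>simp_all add: One_nat_def[symmetric]\<close>)

lemma top_chain_D: "cmp Cat (Kt l) (Dt l) = cmp Cat (Dt (Suc l)) (K' l)"
proof (cases l rule: level_cases)
  case high
  then show ?thesis by (simp add: top_eval_high cmp_idm_left[OF K'_hom] cmp_idm_right[OF K'_hom])
qed (use top_chain_D_low[unfolded tcomp_def] in \<open>simp_all add: One_nat_def[symmetric]\<close>)

lemma top_homotopy_DC:
  "cmp Cat (Dt l) (Ct l) =
     sub Cat (sub Cat (idm Cat (Vt l))
               (if l = 0 then zro Cat (Vt l) (Vt l) else cmp Cat (Kt (l - 1)) (Ht (l - 1))))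
       (cmp Cat (Ht l) (Kt l))"
proof (cases l rule: level_cases)
  case high
  then obtain k where l: "l = Suc k" and k: "3 \<le> k" by (cases l) auto
  have "Ht k = zro Cat (Vt l) (Vt k)" using k by (simp add: l Hmaps_def)
  then have "cmp Cat (Kt k) (Ht k) = zro Cat (V' l) (V' l)"
    using top_hom[of k] high by (simp add: l cmp_zro_right top_eval_high)
  then show ?thesis
    using high by (simp add: l top_eval_high cmp_idm_left[OF idm_hom] cmp_zro_left[OF K'_hom]
        sub_zro[OF idm_hom])
qed (use top_homotopy_DC_low[unfolded typed_defs] in
      \<open>simp_all add: topV_low One_nat_def[symmetric]\<close>)

lemma top_homotopy_CD:
  "cmp Cat (Ct l) (Dt l) =
     sub Cat (sub Cat (idm Cat (V' l))
               (if l = 0 then zro Cat (V' l) (V' l) else cmp Cat (K' (l - 1)) (H't (l - 1))))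
       (cmp Cat (H't l) (K' l))"
proof (cases l rule: level_cases)
  case high
  then obtain k where l: "l = Suc k" and k: "3 \<le> k" by (cases l) auto
  have "cmp Cat (K' k) (H't k) = zro Cat (V' l) (V' l)"
    using k by (simp add: l H'maps_def cmp_zro_right[OF K'_hom])
  then show ?thesis
    using high by (simp add: l top_eval_high cmp_idm_left[OF idm_hom] cmp_zro_left[OF K'_hom]
        sub_zro[OF idm_hom])
qed (use top_homotopy_CD_low[unfolded typed_defs] in
      \<open>simp_all add: One_nat_def[symmetric]\<close>)

lemma top_equiv_htpy: "equiv_htpy Cat Vt Kt V' K' Ct Dt Ht H't"
  unfolding equiv_htpy_def
  using top_maps_hom top_chain_C top_chain_D top_homotopy_DC top_homotopy_CD by blast

end

theorem lemma5p2:
  fixes Cat :: "('o, 'm) acat"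
    and V1 :: 'o and V' :: "nat \<Rightarrow> 'o"
    and K' :: "nat \<Rightarrow> 'm" and K0 C1 D1 H'1 :: 'm
  assumes cat: "additive_cat Cat"
    and bottom: "full_compat_complex Cat V' K'"
    and K0: "K0 \<in> hom Cat (V' 0) V1"
    and C1: "C1 \<in> hom Cat V1 (V' 1)"
    and D1: "D1 \<in> hom Cat (V' 1) V1"
    and H'1: "H'1 \<in> hom Cat (V' 2) (V' 1)"
    and CK: "cmp Cat C1 K0 = K' 0"
    and DK: "cmp Cat D1 (K' 0) = K0"
    and htpy: "sub Cat (idm Cat (V' 1)) (cmp Cat C1 D1) = cmp Cat H'1 (K' 1)"
  shows "full_compat_complex Cat (topV Cat V1 V') (topK Cat V1 V' K' K0 C1 D1 H'1) \<and>
         equiv_htpy Cat (topV Cat V1 V') (topK Cat V1 V' K' K0 C1 D1 H'1) V' K'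
           (Cmaps Cat V1 V' C1) (Dmaps Cat V1 V' K' D1 H'1)
           (Hmaps Cat V1 V' K' D1) (H'maps Cat V' H'1)"
proof -
  interpret changed_first_operator Cat V1 V' K' K0 C1 D1 H'1
    by unfold_locales (use assms in auto)
  show ?thesis
    using full_compat_complex_transfer[OF top_equiv_htpy top_hom top_complex bottom]
      top_equiv_htpy by blast
qed

end
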